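(* Let $d_L\geq2$ and let $\lambda=(\lambda_1,\dots,\lambda_{d_L})$ be a Young diagram, i.e. integers with $\lambda_1\geq\lambda_2\geq\cdots\geq\lambda_{d_L}=0$, labeling an irreducible representation of $U(d_L)$ of dimension $$D_\lambda=\prod_{1\leq i<j\leq d_L}\frac{\lambda_i-\lambda_j+j-i}{j-i}.$$ Then $$\binom{d_L-1+\lambda_1}{d_L-1}\leq D_\lambda,$$ the left side being the dimension of the symmetric representation with Young diagram $(\lambda_1,0,\dots,0)$. *)

theory Defs
  imports Complex_Main
begin

definition weyl_dim :: "nat \<Rightarrow> (nat \<Rightarrow> int) \<Rightarrow> real" where
  "weyl_dim d lam = (\<Prod>(i, j) \<in> {(i, j). 1 \<le> i \<and> i < j \<and> j \<le> d}.
      (real_of_int (lam i - lam j) + real j - real i) / (real j - real i))"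

definition young_diagram :: "nat \<Rightarrow> (nat \<Rightarrow> int) \<Rightarrow> bool" where
  "young_diagram d lam \<longleftrightarrow> (\<forall>i. 1 \<le> i \<and> i < d \<longrightarrow> lam (Suc i) \<le> lam i) \<and> lam d = 0"

end

theory Submission
  imports Defs
begin

text \<open>Substituting \<open>j = i + m\<close> groups the factors of the Weyl formula by the gap \<open>m\<close>. For fixed
  \<open>m\<close> the factors over the window \<open>i = 1, \<dots>, d - m\<close> are each at least \<open>1\<close> and their
  increments \<open>(\<lambda>\<^sub>i - \<lambda>\<^sub>i\<^sub>+\<^sub>m)/m\<close> sum to at least \<open>\<lambda>\<^sub>1/m\<close>, because \<open>\<lambda>\<close> is
  non-increasing and \<open>\<lambda>\<^sub>d = 0\<close>. Since \<open>\<Prod>(1 + x\<^sub>i) \<ge> 1 + \<Sum>x\<^sub>i\<close> for non-negative \<open>x\<^sub>i\<close>,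
  the window contributes at least \<open>(\<lambda>\<^sub>1 + m)/m\<close>, and the product of these over
  \<open>m = 1, \<dots>, d - 1\<close> is the binomial coefficient.\<close>

lemma one_plus_sum_le_prod:
  fixes x :: "'a \<Rightarrow> 'b::linordered_semidom"
  assumes "\<And>i. i \<in> A \<Longrightarrow> 0 \<le> x i"
  shows "1 + sum x A \<le> (\<Prod>i\<in>A. 1 + x i)"
  using assms
proof (induction A rule: infinite_finite_induct)
  case (insert a A)
  have "1 + sum x (insert a A) \<le> (1 + x a) * (1 + sum x A)"
    using insert by (simp add: algebra_simps sum_nonneg)
  also have "\<dots> \<le> (1 + x a) * (\<Prod>i\<in>A. 1 + x i)"
    using insert by (intro mult_left_mono) auto
  finally show ?case
    using insert by simp
qed simp_all

lemma sum_window_diff_ge: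
  fixes l :: "nat \<Rightarrow> 'a::linordered_ab_group_add"
  assumes "1 \<le> n" "1 \<le> m" and anti: "antimono_on {1..n + m} l"
  shows "l 1 - l (n + m) \<le> (\<Sum>i=1..n. l i - l (i + m))"
  using assms(1) anti
proof (induction n rule: dec_induct)
  case (step n)
  have "l (n + m) \<le> l (Suc n)"
    using step.prems \<open>1 \<le> m\<close> by (auto intro: monotone_onD)
  moreover have "l 1 - l (n + m) \<le> (\<Sum>i=1..n. l i - l (i + m))"
    using step.IH step.prems by (auto simp: monotone_on_def)
  ultimately have "(l 1 - l (n + m)) + (l (n + m) - l (Suc n + m)) \<le>
      (\<Sum>i=1..n. l i - l (i + m)) + (l (Suc n) - l (Suc n + m))"
    by (intro add_mono) simp_all
  then show ?case
    by (simp add: sum.cl_ivl_Suc)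
qed simp

lemma one_plus_window_le_prod:
  fixes l :: "nat \<Rightarrow> real"
  assumes "1 \<le> n" "1 \<le> m" and anti: "antimono_on {1..n + m} l"
  shows "1 + (l 1 - l (n + m)) / m \<le> (\<Prod>i=1..n. 1 + (l i - l (i + m)) / m)"
proof -
  have "(l 1 - l (n + m)) / m \<le> (\<Sum>i=1..n. (l i - l (i + m)) / m)"
    using sum_window_diff_ge[OF assms] by (simp add: divide_right_mono flip: sum_divide_distrib)
  also have "1 + \<dots> \<le> (\<Prod>i=1..n. 1 + (l i - l (i + m)) / m)"
    using anti by (intro one_plus_sum_le_prod divide_nonneg_nonneg) (auto simp: monotone_on_def)
  finally show ?thesis
    by simp
qed

lemma of_nat_binomial_eq_prod:
  "of_nat ((n + a) choose n) = (\<Prod>m=1..n. (of_nat a + of_nat m) / of_nat m :: 'a::field_char_0)"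
proof (induction n)
  case (Suc n)
  have "of_nat (Suc n + a choose Suc n) * of_nat (Suc n) =
      ((of_nat a + of_nat (Suc n)) * of_nat ((n + a) choose n) :: 'a)"
    by (metis Suc_times_binomial_eq add_Suc add.commute mult.commute of_nat_add of_nat_mult)
  then have "of_nat (Suc n + a choose Suc n) =
      (of_nat ((n + a) choose n) * ((of_nat a + of_nat (Suc n)) / of_nat (Suc n)) :: 'a)"
    by (simp add: eq_divide_eq field_simps del: of_nat_Suc)
  then show ?case
    using Suc.IH by (simp del: of_nat_Suc)
qed simp

lemma young_diagram_antimono:
  assumes "young_diagram d lam"
  shows "antimono_on {1..d} lam"
proof (rule monotone_onI)
  fix i j assume "i \<in> {1..d}" "j \<in> {1..d}" "i \<le> j"
  from \<open>i \<le> j\<close> \<open>j \<in> {1..d}\<close> show "lam j \<le> lam i"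
  proof (induction j rule: dec_induct)
    case (step k)
    then have "lam (Suc k) \<le> lam k" "lam k \<le> lam i"
      using assms \<open>i \<in> {1..d}\<close> by (simp_all add: young_diagram_def)
    then show ?case
      by (rule order.trans)
  qed simp
qed

lemma weyl_dim_eq_prod_gaps:
  "weyl_dim d lam =
    (\<Prod>m=1..d-1. \<Prod>i=1..d-m. 1 + real_of_int (lam i - lam (i + m)) / m)"
proof -
  have "bij_betw (\<lambda>(m, i). (i, i + m)) (SIGMA m:{1..d-1}. {1..d-m})
      {(i, j). 1 \<le> i \<and> i < j \<and> j \<le> d}"
    by (rule bij_betw_byWitness[where f' = "\<lambda>(i, j). (j - i, i)"]) auto
  then have "weyl_dim d lam = (\<Prod>(m, i)\<in>(SIGMA m:{1..d-1}. {1..d-m}).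
      (real_of_int (lam i - lam (i + m)) + real (i + m) - real i) / (real (i + m) - real i))"
    unfolding weyl_dim_def by (subst prod.reindex_bij_betw[symmetric]) (auto simp: case_prod_unfold)
  also have "\<dots> = (\<Prod>m=1..d-1. \<Prod>i=1..d-m. 1 + real_of_int (lam i - lam (i + m)) / m)"
    by (subst prod.Sigma[symmetric]) (auto intro!: prod.cong simp: field_simps)
  finally show ?thesis .
qed

theorem lemma7:
  fixes d :: nat and lam :: "nat \<Rightarrow> int"
  assumes "d \<ge> 2" and "young_diagram d lam"
  shows "real ((d - 1 + nat (lam 1)) choose (d - 1)) \<le> weyl_dim d lam"
proof -
  define l where "l i = real_of_int (lam i)" for i
  have anti: "antimono_on {1..d} l"
    using young_diagram_antimono[OF assms(2)] by (auto simp: l_def monotone_on_def)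
  have "l d = 0"
    using assms(2) by (simp add: l_def young_diagram_def)
  moreover have "l d \<le> l 1"
    using anti assms(1) by (auto intro: monotone_onD)
  ultimately have "0 \<le> l 1"
    by simp
  then have l1: "real (nat (lam 1)) = l 1"
    by (simp add: l_def)
  have "real ((d - 1 + nat (lam 1)) choose (d - 1)) = (\<Prod>m=1..d-1. (l 1 + m) / m)"
    using of_nat_binomial_eq_prod[where 'a = real, of "d - 1" "nat (lam 1)"] l1 by simp
  also have "\<dots> \<le> (\<Prod>m=1..d-1. \<Prod>i=1..d-m. 1 + (l i - l (i + m)) / m)"
  proof (rule prod_mono)
    fix m assume m: "m \<in> {1..d-1}"
    have "d - m + m = d"
      using m by auto
    then have "(l 1 + m) / m = 1 + (l 1 - l (d - m + m)) / m"
      using m \<open>l d = 0\<close> by (simp add: field_simps)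
    also have "\<dots> \<le> (\<Prod>i=1..d-m. 1 + (l i - l (i + m)) / m)"
      using m by (intro one_plus_window_le_prod monotone_on_subset[OF anti]) auto
    finally show "0 \<le> (l 1 + m) / m \<and> (l 1 + m) / m \<le> (\<Prod>i=1..d-m. 1 + (l i - l (i + m)) / m)"
      using \<open>0 \<le> l 1\<close> by simp
  qed
  also have "\<dots> = weyl_dim d lam"
    by (simp add: weyl_dim_eq_prod_gaps l_def)
  finally show ?thesis .
qed

end
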